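(* For each integer $d\ge1$, with $[d]=\{1,\dots,d\}$, we have $|\mathcal Q_{[d]}|=\prod_{j=1}^d j!$.
   Context: For a finite set $J$ of non-negative integers, $\mathcal Q_J$ is the set of polynomials $\sum_{j\in J}t_jx^j$ with all $t_j\in(-1/2,1/2]$ such that $\sum_{j\in J}t_jm^j\in\mathbb Z$ for all $m\in\mathbb Z$. *)

theory Defs
  imports "HOL-Computational_Algebra.Polynomial"
begin

definition Q :: "nat set \<Rightarrow> real poly set" where
  "Q J = {p. (\<forall>i. i \<notin> J \<longrightarrow> coeff p i = 0)
            \<and> (\<forall>j\<in>J. coeff p j \<in> {-1/2<..1/2})
            \<and> (\<forall>m::int. poly p (of_int m) \<in> \<int>)}"

end

theory Submission
  imports Defs
begin

text \<open>
  If p is integer-valued of degree at most n, then n! times its n-th coefficient is an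
  integer: n forward differences p(x + 1) - p(x) reduce p to the constant n! coeff p n.
  Reducing every coefficient of a polynomial modulo \<int> into (-1/2, 1/2] preserves integer
  values, since it subtracts a polynomial with integer coefficients. Hence, with
  n = d + 1, a pair (q, a) where q \<in> Q_[d] and a/n! \<in> (-1/2, 1/2] determines the element
  reduce(q + a binom(x, n)) of Q_[n]; conversely, p \<in> Q_[n] is recovered from its top
  coefficient a/n! and from q = reduce(p - a binom(x, n)). This bijection shows
  |Q_[n]| = n! |Q_[d]|.
\<close>

definition int_valued :: "'a::comm_ring_1 poly \<Rightarrow> bool" where
  "int_valued p \<longleftrightarrow> (\<forall>m::int. poly p (of_int m) \<in> \<int>)"

lemma int_valued_add: "int_valued p \<Longrightarrow> int_valued q \<Longrightarrow> int_valued (p + q)"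
  by (simp add: int_valued_def)

lemma int_valued_diff: "int_valued p \<Longrightarrow> int_valued q \<Longrightarrow> int_valued (p - q)"
  by (simp add: int_valued_def)

lemma int_valued_smult: "c \<in> \<int> \<Longrightarrow> int_valued p \<Longrightarrow> int_valued (smult c p)"
  by (simp add: int_valued_def)

lemma int_valued_if_coeffs_Ints: "(\<And>i. coeff p i \<in> \<int>) \<Longrightarrow> int_valued p"
  unfolding int_valued_def poly_altdef by (auto intro!: Ints_sum Ints_mult Ints_power)

definition fwd_diff :: "'a::comm_ring_1 poly \<Rightarrow> 'a poly" where
  "fwd_diff p = p \<circ>\<^sub>p [:1, 1:] - p"

lemma poly_fwd_diff: "poly (fwd_diff p) x = poly p (x + 1) - poly p x"
  by (simp add: fwd_diff_def poly_pcompose add.commute)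

lemma int_valued_fwd_diff: "int_valued p \<Longrightarrow> int_valued (fwd_diff p)"
  unfolding int_valued_def poly_fwd_diff
  by (metis Ints_diff of_int_1 of_int_add)

lemma degree_pcompose_shift: "degree (p \<circ>\<^sub>p [:1, 1::'a::idom:]) = degree p"
  by (simp add: degree_pcompose)

lemma coeff_pcompose_shift_top:
  fixes p :: "'a::idom poly"
  assumes "degree p \<le> n"
  shows "coeff (p \<circ>\<^sub>p [:1, 1:]) n = coeff p n"
proof (cases "degree p = n")
  case True
  then show ?thesis
    using lead_coeff_comp[of "[:1, 1::'a:]" p] by (simp add: degree_pcompose_shift)
next
  case False
  with assms show ?thesis by (simp add: coeff_eq_0 degree_pcompose_shift)
qed

lemma degree_fwd_diff_le:
  fixes p :: "'a::idom poly"
  assumes "degree p \<le> Suc n"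
  shows "degree (fwd_diff p) \<le> n"
proof -
  have "degree (fwd_diff p) \<le> Suc n"
    using assms degree_diff_le[of "p \<circ>\<^sub>p [:1, 1:]" "Suc n" p]
    by (simp add: fwd_diff_def degree_pcompose_shift)
  moreover have "coeff (fwd_diff p) (Suc n) = 0"
    using coeff_pcompose_shift_top[OF assms] by (simp add: fwd_diff_def)
  ultimately show ?thesis
    by (intro degree_le) (metis Suc_lessI coeff_eq_0 le_less_trans)
qed

lemma fwd_diff_pCons: "fwd_diff (pCons a p) = p \<circ>\<^sub>p [:1, 1:] + pCons 0 (fwd_diff p)"
  by (simp add: fwd_diff_def pcompose_pCons algebra_simps)

lemma coeff_fwd_diff_top:
  fixes p :: "'a::idom poly"
  assumes "degree p \<le> Suc n"
  shows "coeff (fwd_diff p) n = of_nat (Suc n) * coeff p (Suc n)"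
  using assms
proof (induction n arbitrary: p)
  case 0
  obtain a q where p: "p = pCons a q" by (cases p)
  with 0 have "degree q \<le> 0" by (auto split: if_splits)
  then show ?case
    using coeff_pcompose_shift_top[of q 0] by (simp add: p fwd_diff_pCons)
next
  case (Suc n)
  obtain a q where p: "p = pCons a q" by (cases p)
  with Suc.prems have q: "degree q \<le> Suc n" by (auto split: if_splits)
  have "coeff (fwd_diff p) (Suc n) = coeff q (Suc n) + of_nat (Suc n) * coeff q (Suc n)"
    using coeff_pcompose_shift_top[OF q] Suc.IH[OF q] by (simp add: p fwd_diff_pCons)
  then show ?case
    by (simp add: p algebra_simps)
qed

lemma fact_mult_coeff_Ints_if_int_valued:
  fixes p :: "'a::{idom, ring_char_0} poly"
  assumes "degree p \<le> n" "int_valued p"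
  shows "fact n * coeff p n \<in> \<int>"
  using assms
proof (induction n arbitrary: p)
  case 0
  then show ?case
    using poly_0_coeff_0[of p] by (simp add: int_valued_def) (metis of_int_0)
next
  case (Suc n)
  have "fact n * coeff (fwd_diff p) n \<in> \<int>"
    using Suc degree_fwd_diff_le int_valued_fwd_diff by blast
  then show ?case
    using coeff_fwd_diff_top[OF Suc.prems(1)] by (simp add: algebra_simps)
qed

definition nearest_int :: "real \<Rightarrow> int" where
  "nearest_int c = \<lceil>c - 1/2\<rceil>"

definition centered_residue :: "real \<Rightarrow> real" where
  "centered_residue c = c - of_int (nearest_int c)"

lemma centered_residue_in_box: "centered_residue c \<in> {-1/2<..1/2}"
  unfolding centered_residue_def nearest_int_def by auto linarith+

lemma centered_residue_eq_self: "c \<in> {-1/2<..1/2} \<Longrightarrow> centered_residue c = c"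
  unfolding centered_residue_def nearest_int_def by (simp add: ceiling_eq_iff)

lemma centered_residue_eq_iff: "centered_residue c = centered_residue c' \<longleftrightarrow> c - c' \<in> \<int>"
proof
  assume "centered_residue c = centered_residue c'"
  then have "c - c' = of_int (nearest_int c - nearest_int c')"
    by (simp add: centered_residue_def)
  then show "c - c' \<in> \<int>" by simp
next
  assume "c - c' \<in> \<int>"
  then obtain k where "c = c' + of_int k" by (metis Ints_cases add.commute diff_add_cancel)
  then have "nearest_int c = nearest_int c' + k"
    unfolding nearest_int_def by (metis ceiling_add_of_int diff_add_eq)
  with \<open>c = c' + of_int k\<close> show "centered_residue c = centered_residue c'"
    by (simp add: centered_residue_def)
qed

definition round_poly :: "real poly \<Rightarrow> real poly" where
  "round_poly p = (\<Sum>i\<le>degree p. monom (of_int (nearest_int (coeff p i))) i)"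

definition reduce_poly :: "real poly \<Rightarrow> real poly" where
  "reduce_poly p = p - round_poly p"

lemma coeff_round_poly:
  "coeff (round_poly p) i = (if i \<le> degree p then of_int (nearest_int (coeff p i)) else 0)"
  unfolding round_poly_def by (simp add: coeff_sum coeff_monom)

lemma coeff_reduce_poly: "coeff (reduce_poly p) i = centered_residue (coeff p i)"
  by (cases "i \<le> degree p")
     (simp_all add: reduce_poly_def coeff_round_poly centered_residue_def
        nearest_int_def ceiling_eq_iff coeff_eq_0)

lemma int_valued_reduce_poly: "int_valued p \<Longrightarrow> int_valued (reduce_poly p)"
  using int_valued_if_coeffs_Ints[of "round_poly p"]
  by (simp add: reduce_poly_def int_valued_diff coeff_round_poly)

lemma reduce_poly_eq_iff:
  "reduce_poly p = reduce_poly q \<longleftrightarrow> (\<forall>i. coeff p i - coeff q i \<in> \<int>)"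
  by (simp add: poly_eq_iff coeff_reduce_poly centered_residue_eq_iff)

lemma reduce_poly_eq_self: "(\<And>i. coeff p i \<in> {-1/2<..1/2}) \<Longrightarrow> reduce_poly p = p"
  by (simp add: poly_eq_iff coeff_reduce_poly centered_residue_eq_self)

lemma gbinomial_of_int_in_Ints: "(of_int m :: 'a::field_char_0) gchoose n \<in> \<int>"
proof (cases "m \<ge> 0")
  case True
  then have "(of_int m :: 'a) = of_nat (nat m)" by simp
  then show ?thesis by (simp add: binomial_gbinomial [symmetric])
next
  case False
  then have "(of_nat n - of_int m - 1 :: 'a) = of_nat (nat (int n - m - 1))"
    by simp
  then show ?thesis
    using gbinomial_negated_upper[of "of_int m :: 'a" n]
    by (simp add: binomial_gbinomial [symmetric])
qed

definition binomial_poly :: "nat \<Rightarrow> real poly" where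
  "binomial_poly n = smult (1 / fact n) (\<Prod>i<n. [:- of_nat i, 1:])"

lemma poly_binomial_poly: "poly (binomial_poly n) x = x gchoose n"
  by (simp add: binomial_poly_def poly_prod gbinomial_prod_rev atLeast0LessThan)

lemma int_valued_binomial_poly: "int_valued (binomial_poly n)"
  by (simp add: int_valued_def poly_binomial_poly gbinomial_of_int_in_Ints)

lemma coeff_0_binomial_poly: "n \<noteq> 0 \<Longrightarrow> coeff (binomial_poly n) 0 = 0"
  by (simp add: poly_0_coeff_0 [symmetric] poly_binomial_poly gbinomial_0_left)

lemma degree_binomial_poly: "degree (binomial_poly n) = n"
  and lead_coeff_binomial_poly: "coeff (binomial_poly n) n = 1 / fact n"
proof -
  have "degree (\<Prod>i<n. [:- of_nat i, 1::real:]) = n"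
    by (subst degree_prod_eq_sum_degree) auto
  moreover have "lead_coeff (\<Prod>i<n. [:- of_nat i, 1::real:]) = 1"
    by (simp add: lead_coeff_prod)
  ultimately show "degree (binomial_poly n) = n" "coeff (binomial_poly n) n = 1 / fact n"
    by (simp_all add: binomial_poly_def)
qed

lemma mem_Q_iff:
  "p \<in> Q J \<longleftrightarrow>
     (\<forall>i. i \<notin> J \<longrightarrow> coeff p i = 0) \<and> (\<forall>i. coeff p i \<in> {-1/2<..1/2}) \<and> int_valued p"
  unfolding Q_def int_valued_def by auto

lemma degree_le_if_mem_Q: "p \<in> Q {1..n} \<Longrightarrow> degree p \<le> n"
  by (intro degree_le) (simp add: mem_Q_iff)

definition centered_numerators :: "real \<Rightarrow> int set" where
  "centered_numerators c = {a. of_int a / c \<in> {-1/2<..1/2}}"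

lemma card_centered_numerators:
  assumes "N > 0"
  shows "card (centered_numerators (of_int N)) = nat N"
proof -
  have "real_of_int a / of_int N \<in> {-1/2<..1/2} \<longleftrightarrow> - N < 2 * a \<and> 2 * a \<le> N" for a
  proof -
    have "real_of_int a / of_int N \<in> {-1/2<..1/2} \<longleftrightarrow>
          - of_int N < real_of_int (2 * a) \<and> real_of_int (2 * a) \<le> of_int N"
      using assms by (auto simp: field_simps)
    then show ?thesis by linarith
  qed
  also have "- N < 2 * a \<and> 2 * a \<le> N \<longleftrightarrow> a \<in> {- ((N - 1) div 2) .. N div 2}" for a
    by auto
  finally have "centered_numerators (of_int N) = {- ((N - 1) div 2) .. N div 2}"
    unfolding centered_numerators_def by blast
  moreover have "N div 2 + (N - 1) div 2 + 1 = N" by presburger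
  ultimately show ?thesis by simp
qed

definition adjoin_top_coeff :: "nat \<Rightarrow> real poly \<times> int \<Rightarrow> real poly" where
  "adjoin_top_coeff n = (\<lambda>(q, a). reduce_poly (q + smult (of_int a) (binomial_poly n)))"

lemma coeff_adjoin_top_coeff:
  "coeff (adjoin_top_coeff n (q, a)) i =
     centered_residue (coeff q i + of_int a * coeff (binomial_poly n) i)"
  by (simp add: adjoin_top_coeff_def coeff_reduce_poly)

lemma adjoin_top_coeff_mem_Q:
  assumes "q \<in> Q {1..d}"
  shows "adjoin_top_coeff (Suc d) (q, a) \<in> Q {1..Suc d}"
  unfolding mem_Q_iff
proof (intro conjI allI impI)
  have "int_valued q" using assms by (simp add: mem_Q_iff)
  then show "int_valued (adjoin_top_coeff (Suc d) (q, a))"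
    unfolding adjoin_top_coeff_def
    by (simp add: int_valued_reduce_poly int_valued_add int_valued_smult int_valued_binomial_poly)
next
  fix i :: nat
  show "coeff (adjoin_top_coeff (Suc d) (q, a)) i \<in> {-1/2<..1/2}"
    unfolding coeff_adjoin_top_coeff by (rule centered_residue_in_box)
  assume "i \<notin> {1..Suc d}"
  then consider "i = 0" | "i > Suc d" by fastforce
  then show "coeff (adjoin_top_coeff (Suc d) (q, a)) i = 0"
  proof cases
    case 1
    with assms show ?thesis
      by (simp add: coeff_adjoin_top_coeff coeff_0_binomial_poly mem_Q_iff centered_residue_eq_self)
  next
    case 2
    with degree_le_if_mem_Q [OF assms] have "coeff q i = 0" "coeff (binomial_poly (Suc d)) i = 0"
      by (simp_all add: coeff_eq_0 degree_binomial_poly)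
    then show ?thesis
      by (simp add: coeff_adjoin_top_coeff centered_residue_eq_self)
  qed
qed

lemma top_coeff_adjoin_top_coeff:
  assumes "q \<in> Q {1..d}" "of_int a / fact (Suc d) \<in> {-1/2<..(1/2::real)}"
  shows "coeff (adjoin_top_coeff (Suc d) (q, a)) (Suc d) = of_int a / fact (Suc d)"
  using assms by (simp add: coeff_adjoin_top_coeff lead_coeff_binomial_poly mem_Q_iff
      centered_residue_eq_self)

lemma inj_on_adjoin_top_coeff:
  "inj_on (adjoin_top_coeff (Suc d))
     (Q {1..d} \<times> centered_numerators (fact (Suc d)))"
proof (rule inj_onI)
  fix x y
  assume x: "x \<in> Q {1..d} \<times> centered_numerators (fact (Suc d))"
    and y: "y \<in> Q {1..d} \<times> centered_numerators (fact (Suc d))"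
    and eq_xy: "adjoin_top_coeff (Suc d) x = adjoin_top_coeff (Suc d) y"
  obtain q a q' a' where xy: "x = (q, a)" "y = (q', a')" by fastforce
  with eq_xy have eq: "adjoin_top_coeff (Suc d) (q, a) = adjoin_top_coeff (Suc d) (q', a')"
    by simp
  from x y xy have q: "q \<in> Q {1..d}" and q': "q' \<in> Q {1..d}"
    and a: "of_int a / fact (Suc d) \<in> {-1/2<..(1/2::real)}"
    and a': "of_int a' / fact (Suc d) \<in> {-1/2<..(1/2::real)}"
    by (simp_all add: centered_numerators_def)
  have "(of_int a :: real) / fact (Suc d) = of_int a' / fact (Suc d)"
    using eq top_coeff_adjoin_top_coeff [OF q a] top_coeff_adjoin_top_coeff [OF q' a'] by simp
  then have "a = a'" by simp
  with eq have "\<forall>i. coeff q i - coeff q' i \<in> \<int>"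
    by (simp add: adjoin_top_coeff_def reduce_poly_eq_iff)
  then have "reduce_poly q = reduce_poly q'"
    by (simp add: reduce_poly_eq_iff)
  with q q' have "q = q'"
    by (simp add: mem_Q_iff reduce_poly_eq_self)
  with \<open>a = a'\<close> xy show "x = y" by simp
qed

lemma mem_Q_imp_in_image_adjoin_top_coeff:
  assumes p: "p \<in> Q {1..Suc d}"
  shows "p \<in> adjoin_top_coeff (Suc d) ` (Q {1..d} \<times> centered_numerators (fact (Suc d)))"
proof -
  have p_zero: "\<And>i. i \<notin> {1..Suc d} \<Longrightarrow> coeff p i = 0"
    and p_box: "\<And>i. coeff p i \<in> {-1/2<..1/2}" and "int_valued p"
    using p by (simp_all add: mem_Q_iff)
  then have "fact (Suc d) * coeff p (Suc d) \<in> \<int>"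
    using fact_mult_coeff_Ints_if_int_valued degree_le_if_mem_Q [OF p] by blast
  then obtain a where "fact (Suc d) * coeff p (Suc d) = of_int a"
    by (elim Ints_cases)
  then have top: "coeff p (Suc d) = of_int a / fact (Suc d)"
    by (simp add: eq_divide_eq ac_simps del: fact_Suc)
  define s where "s = smult (of_int a) (binomial_poly (Suc d))"
  define q where "q = reduce_poly (p - s)"
  have "q \<in> Q {1..d}"
    unfolding mem_Q_iff
  proof (intro conjI allI impI)
    show "int_valued q"
      unfolding q_def s_def
      by (simp add: int_valued_reduce_poly int_valued_diff int_valued_smult
          int_valued_binomial_poly \<open>int_valued p\<close>)
    show "coeff q i \<in> {-1/2<..1/2}" for i
      unfolding q_def coeff_reduce_poly by (rule centered_residue_in_box)
    fix i :: nat
    assume "i \<notin> {1..d}"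
    then consider "i = 0" | "i = Suc d" | "i > Suc d" by fastforce
    then have "coeff (p - s) i = 0"
    proof cases
      case 1
      then show ?thesis
        using p_zero by (simp add: s_def coeff_0_binomial_poly)
    next
      case 2
      then show ?thesis
        by (simp add: s_def top lead_coeff_binomial_poly)
    next
      case 3
      then show ?thesis
        using p_zero by (simp add: s_def coeff_eq_0 degree_binomial_poly)
    qed
    then show "coeff q i = 0"
      by (simp add: q_def coeff_reduce_poly centered_residue_eq_self)
  qed
  moreover have "a \<in> centered_numerators (fact (Suc d))"
    using p_box top by (metis centered_numerators_def mem_Collect_eq)
  moreover have "adjoin_top_coeff (Suc d) (q, a) = p"
  proof -
    have "reduce_poly (q + s) = reduce_poly p"
      unfolding reduce_poly_eq_iff q_def
      by (simp add: coeff_reduce_poly centered_residue_def)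
    then show ?thesis
      using p_box by (simp add: adjoin_top_coeff_def s_def reduce_poly_eq_self)
  qed
  ultimately show ?thesis by force
qed

lemma bij_betw_adjoin_top_coeff:
  "bij_betw (adjoin_top_coeff (Suc d))
     (Q {1..d} \<times> centered_numerators (fact (Suc d))) (Q {1..Suc d})"
  unfolding bij_betw_def
  using inj_on_adjoin_top_coeff adjoin_top_coeff_mem_Q mem_Q_imp_in_image_adjoin_top_coeff
  by fastforce

lemma card_Q_Suc: "card (Q {1..Suc d}) = card (Q {1..d}) * fact (Suc d)"
proof -
  have "card (Q {1..Suc d}) = card (Q {1..d} \<times> centered_numerators (fact (Suc d)))"
    using bij_betw_same_card [OF bij_betw_adjoin_top_coeff] by simp
  also have "\<dots> = card (Q {1..d}) * card (centered_numerators (fact (Suc d)))"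
    by (rule card_cartesian_product)
  also have "card (centered_numerators (fact (Suc d))) = fact (Suc d)"
    using card_centered_numerators [of "fact (Suc d)"]
    by (metis fact_gt_zero nat_int of_int_fact of_nat_fact)
  finally show ?thesis .
qed

lemma Q_empty: "Q {} = {0}"
  by (auto simp: Q_def poly_eq_iff)

lemma card_Q_atLeastAtMost: "card (Q {1..d}) = (\<Prod>j=1..d. fact j)"
proof (induction d)
  case 0
  then show ?case by (simp add: Q_empty)
next
  case (Suc d)
  have "(\<Prod>j=1..Suc d. fact j) = (\<Prod>j=1..d. fact j) * (fact (Suc d) :: nat)"
    by (simp add: prod.nat_ivl_Suc')
  with Suc.IH show ?case by (simp only: card_Q_Suc)
qed

theorem mainTheorem14:
  fixes d :: nat
  assumes "d \<ge> 1"
  shows "card (Q {1..d}) = (\<Prod>j=1..d. fact j)"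
  by (rule card_Q_atLeastAtMost)

end
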